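(* For every $p,q\in\mathbb{N}$ with $p/q\ge2$, we have $\overline{\xi_f}(E_{p/q})=p/q$.
   Context: For $p,q\in\mathbb{N}$ with $p/q\ge2$, the fraction graph $E_{p/q}$ has vertex set $\mathbb{Z}_p=\{0,1,\dots,p-1\}$, and distinct vertices $i,j$ are adjacent iff their cyclic distance $\min(|i-j|, p-|i-j|)$ is strictly less than $q$ (the graph depends on the pair $(p,q)$). For a graph $G$, the complement of the projective rank $\overline{\xi_f}(G)$ is the infimum of $d/r$ over all $d,r\in\mathbb{N}$ for which there is an assignment of $r$-dimensional subspaces $W_v\le\mathbb{C}^d$ to the vertices $v$ of $G$ such that distinct non-adjacent vertices receive orthogonal subspaces. *)

theory Defs
  imports Complex_Main "Jordan_Normal_Form.VS_Connect"
begin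

text \<open>Fraction graph E_{p/q}: vertex set Z_p = {0..<p}; distinct i, j adjacent iff
  their cyclic distance min(|i-j|, p-|i-j|) is strictly less than q.\<close>

definition cyc_dist :: "nat \<Rightarrow> nat \<Rightarrow> nat \<Rightarrow> nat" where
  "cyc_dist p i j = (let a = (if i \<le> j then j - i else i - j) in min a (p - a))"

definition frac_adj :: "nat \<Rightarrow> nat \<Rightarrow> nat \<Rightarrow> nat \<Rightarrow> bool" where
  "frac_adj p q i j \<longleftrightarrow> i \<noteq> j \<and> cyc_dist p i j < q"

definition herm_inner :: "complex vec \<Rightarrow> complex vec \<Rightarrow> complex" where
  "herm_inner x y = (\<Sum>i<dim_vec x. x $ i * cnj (y $ i))"

definition is_subspace_of_dim :: "nat \<Rightarrow> nat \<Rightarrow> complex vec set \<Rightarrow> bool" where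
  "is_subspace_of_dim d r W \<longleftrightarrow>
     subspace class_ring W (module_vec TYPE(complex) d) \<and>
     vectorspace.dim class_ring ((module_vec TYPE(complex) d)\<lparr>carrier := W\<rparr>) = r"

definition orth_sets :: "complex vec set \<Rightarrow> complex vec set \<Rightarrow> bool" where
  "orth_sets U W \<longleftrightarrow> (\<forall>x\<in>U. \<forall>y\<in>W. herm_inner x y = 0)"

definition compl_proj_rep :: "'v set \<Rightarrow> ('v \<Rightarrow> 'v \<Rightarrow> bool) \<Rightarrow> nat \<Rightarrow> nat \<Rightarrow> bool" where
  "compl_proj_rep V adj d r \<longleftrightarrow>
     (\<exists>W :: 'v \<Rightarrow> complex vec set.
        (\<forall>v\<in>V. is_subspace_of_dim d r (W v)) \<and>
        (\<forall>u\<in>V. \<forall>v\<in>V. u \<noteq> v \<and> \<not> adj u v \<longrightarrow> orth_sets (W u) (W v)))"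

definition compl_proj_rank :: "'v set \<Rightarrow> ('v \<Rightarrow> 'v \<Rightarrow> bool) \<Rightarrow> real" where
  "compl_proj_rank V adj =
     Inf {real d / real r | d r. d \<ge> 1 \<and> r \<ge> 1 \<and> compl_proj_rep V adj d r}"

end

theory Submission
  imports Defs "HOL-Library.Function_Algebras" "HOL-Library.Indicator_Function"
begin

text \<open>Upper bound: give vertex \<open>i\<close> the coordinate subspace of \<open>\<complex>\<^sup>p\<close> spanned by the \<open>q\<close>
  cyclically consecutive coordinates \<open>i, \<dots>, i + q - 1\<close>. Two such windows meet only if
  their vertices are at cyclic distance less than \<open>q\<close>, i.e. adjacent, so this is a
  representation with ratio \<open>p / q\<close>.

  Lower bound: if \<open>2 q \<le> p\<close> and subspaces \<open>U 0, \<dots>, U (p - 1)\<close> of \<open>\<complex>\<^sup>d\<close> satisfy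
  \<open>U i \<bottom> U j\<close> whenever \<open>i\<close> and \<open>j\<close> are at cyclic distance at least \<open>q\<close>, then
  \<open>\<Sum>i. dim (U i) \<le> q d\<close>; for an \<open>r\<close>-dimensional representation this reads \<open>p r \<le> q d\<close>.
  The proof is by induction on \<open>q\<close>; for \<open>q = 1\<close> the \<open>U i\<close> are pairwise orthogonal.
  For \<open>q + 1\<close> write \<open>p = m (q + 1) + s\<close> with \<open>s \<le> q\<close> and let \<open>P j\<close> be the span of
  \<open>U 0, \<dots>, U j\<close>. Then \<open>P s\<close> and the \<open>U (s + t (q + 1))\<close> with \<open>0 < t < m\<close> are pairwise
  orthogonal, so their dimensions add up to at most \<open>d\<close>. Deleting the positions
  \<open>s + t (q + 1)\<close> and replacing \<open>U (j + 1)\<close> by \<open>P j \<inter> U (j + 1)\<close> for \<open>j < s\<close> leaves a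
  family for \<open>q\<close> on \<open>m q + s\<close> positions, of total dimension at most \<open>q d\<close>. Grassmann's
  inequality \<open>dim A + dim B \<le> dim (A + B) + dim (A \<inter> B)\<close>, applied along
  \<open>P 0 \<subseteq> \<dots> \<subseteq> P s\<close>, shows that the two families together account for all of
  \<open>\<Sum>i. dim (U i)\<close>.\<close>

section \<open>Grassmann's inequality\<close>

context vector_space
begin

lemma independent_card_le_dim_of_finite_span:
  assumes "independent X" "X \<subseteq> V" "V \<subseteq> span E" "finite E"
  shows "card X \<le> dim V"
proof -
  obtain B where B: "B \<subseteq> V" "independent B" "V \<subseteq> span B" "card B = dim V"
    using basis_exists by blast
  have "finite B"
    using independent_span_bound[OF assms(4) B(2)] B(1) assms(3) by blast
  then show ?thesis
    using independent_span_bound[OF _ assms(1)] assms(2) B(3,4) by fastforce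
qed

lemma independent_Un_of_extensions:
  assumes S: "subspace S" and T: "subspace T" and I: "S \<inter> T \<subseteq> span I"
    and C: "I \<subseteq> C" "C \<subseteq> S" "independent C"
    and D: "I \<subseteq> D" "D \<subseteq> T" "independent D" "finite D"
  shows "independent (C \<union> D)"
proof -
  have "independent (C \<union> X)" if "X \<subseteq> D - C" for X
  proof -
    from D(4) that have "finite X" by (meson finite_Diff finite_subset)
    then show ?thesis using that
    proof (induction X rule: finite_induct)
      case empty
      then show ?case using C(3) by simp
    next
      case (insert x X)
      have "x \<notin> span (C \<union> X)"
      proof
        assume "x \<in> span (C \<union> X)"
        then obtain c y where x: "x = c + y" and c: "c \<in> span C" and y: "y \<in> span X"
          unfolding span_Un by blast
        have "y \<in> T" using y span_minimal[OF _ T, of X] insert.prems D(2) by blast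
        moreover have "x \<in> T" using insert.prems D(2) by blast
        ultimately have "c \<in> T" using subspace_diff[OF T, of x y] x by simp
        moreover have "c \<in> S" using c span_minimal[OF C(2) S] by blast
        ultimately have "c \<in> span (I \<union> X)" using I span_mono[of I "I \<union> X"] by blast
        then have "x \<in> span (I \<union> X)"
          using x y span_add span_mono[of X "I \<union> X"] by blast
        moreover have "span (I \<union> X) \<subseteq> span (D - {x})"
          using insert C(1) D(1) by (intro span_mono) blast
        ultimately have "x \<in> span (D - {x})" by blast
        then show False using D(3) insert.prems unfolding dependent_def by blast
      qed
      moreover have "independent (C \<union> X)" using insert by blast
      ultimately have "independent (insert x (C \<union> X))" by (rule independent_insertI)
      then show ?case by simp
    qed
  qed
  from this[of "D - C"] show ?thesis by simp
qed

lemma dim_add_dim_le_dim_Un_Int: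
  assumes S: "subspace S" and T: "subspace T" and E: "finite E" "S \<union> T \<subseteq> span E"
  shows "dim S + dim T \<le> dim (S \<union> T) + dim (S \<inter> T)"
proof -
  have finite_indep: "finite X" if "independent X" "X \<subseteq> S \<union> T" for X
    using independent_span_bound[OF E(1) that(1)] that(2) E(2) by blast
  obtain I where I: "I \<subseteq> S \<inter> T" "independent I" "S \<inter> T \<subseteq> span I" "card I = dim (S \<inter> T)"
    using basis_exists by blast
  obtain C where C: "I \<subseteq> C" "C \<subseteq> S" "independent C" "S \<subseteq> span C"
    using maximal_independent_subset_extend[of I S] I(1,2) by auto
  obtain D where D: "I \<subseteq> D" "D \<subseteq> T" "independent D" "T \<subseteq> span D"
    using maximal_independent_subset_extend[of I T] I(1,2) by auto
  have fin: "finite C" "finite D" "finite I"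
    using finite_indep[OF C(3)] finite_indep[OF D(3)] finite_indep[OF I(2)] C(2) D(2) I(1)
    by auto
  have "independent (C \<union> D)"
    using S T I(3) C(1-3) D(1-3) fin(2) by (rule independent_Un_of_extensions)
  then have "card (C \<union> D) \<le> dim (S \<union> T)"
    using C(2) D(2) E by (intro independent_card_le_dim_of_finite_span) auto
  moreover have "card (C \<inter> D) \<le> card I"
  proof -
    have "independent (C \<inter> D)" by (rule independent_mono[OF C(3)]) blast
    moreover have "C \<inter> D \<subseteq> span I" using C(2) D(2) I(3) by blast
    ultimately show ?thesis using independent_span_bound[OF fin(3)] by blast
  qed
  moreover have "card C = dim S" "card D = dim T"
    using basis_card_eq_dim[OF C(2,4,3)] basis_card_eq_dim[OF D(2,4,3)] by auto
  ultimately show ?thesis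
    using card_Un_Int[OF fin(1,2)] I(4) by linarith
qed

lemma span_Un_span_left: "span (span A \<union> B) = span (A \<union> B)"
  by (simp only: span_Un span_span)

lemma sum_dim_le_dim_Union_plus_overlaps:
  assumes E: "finite E" and U: "\<And>i. i \<le> k \<Longrightarrow> subspace (U i) \<and> U i \<subseteq> span E"
  shows "(\<Sum>i\<le>k. dim (U i)) \<le> dim (\<Union>i\<le>k. U i) + (\<Sum>j<k. dim (span (\<Union>i\<le>j. U i) \<inter> U (Suc j)))"
  using U
proof (induction k)
  case 0
  show ?case by simp
next
  case (Suc k)
  let ?P = "span (\<Union>i\<le>k. U i)"
  have "(\<Union>i\<le>k. U i) \<subseteq> span E"
  proof (rule UN_least)
    show "U i \<subseteq> span E" if "i \<in> {..k}" for i
      using Suc.prems[of i] that by simp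
  qed
  then have "?P \<subseteq> span E"
    using span_minimal subspace_span by blast
  then have "dim ?P + dim (U (Suc k)) \<le> dim (?P \<union> U (Suc k)) + dim (?P \<inter> U (Suc k))"
    using Suc.prems[of "Suc k"] by (intro dim_add_dim_le_dim_Un_Int[OF _ _ E]) auto
  moreover have "(\<Union>i\<le>Suc k. U i) = (\<Union>i\<le>k. U i) \<union> U (Suc k)"
    by (simp add: atMost_Suc Un_commute)
  then have "dim (?P \<union> U (Suc k)) = dim (\<Union>i\<le>Suc k. U i)"
    by (metis dim_span span_Un_span_left)
  moreover have "(\<Sum>i\<le>k. dim (U i)) \<le> dim ?P + (\<Sum>j<k. dim (span (\<Union>i\<le>j. U i) \<inter> U (Suc j)))"
    using Suc.IH Suc.prems by simp
  ultimately show ?case by simp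
qed

end

section \<open>Coordinate spaces and orthogonality\<close>

text \<open>\<open>complex vec\<close> is not a type of vectors of one fixed dimension, so it does not
  carry a \<open>vector_space\<close> instance. We work instead in the space of all functions
  \<open>nat \<Rightarrow> complex\<close>, where \<open>\<complex>\<^sup>d\<close> becomes the coordinate space of \<open>{..<d}\<close>.\<close>

interpretation cfun: vector_space "\<lambda>(c::complex) (f::nat \<Rightarrow> complex) i. c * f i"
  by unfold_locales (auto simp: fun_eq_iff algebra_simps)

lemma sum_fun_apply: "(sum f A) x = (\<Sum>a\<in>A. f a x)"
  by (induct A rule: infinite_finite_induct) auto

abbreviation unit_fun :: "nat \<Rightarrow> nat \<Rightarrow> complex" where
  "unit_fun j \<equiv> indicator {j}"

definition coord_space :: "nat set \<Rightarrow> (nat \<Rightarrow> complex) set" where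
  "coord_space S = {f. \<forall>i. i \<notin> S \<longrightarrow> f i = 0}"

lemma subspace_coord_space: "cfun.subspace (coord_space S)"
  unfolding cfun.subspace_def coord_space_def by auto

lemma span_unit_funs_subset_coord_space:
  "cfun.span (unit_fun ` S) \<subseteq> coord_space S"
  by (rule cfun.span_minimal[OF _ subspace_coord_space]) (auto simp: coord_space_def indicator_eq_0_iff)

lemma coord_space_eq_span:
  assumes "finite S"
  shows "coord_space S = cfun.span (unit_fun ` S)"
proof
  show "coord_space S \<subseteq> cfun.span (unit_fun ` S)"
  proof
    fix f assume f: "f \<in> coord_space S"
    have "f = (\<Sum>j\<in>S. (\<lambda>i. f j * unit_fun j i))"
    proof
      fix i
      have "(\<Sum>j\<in>S. f j * unit_fun j i) = (\<Sum>j\<in>S. if i = j then f j else 0)"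
        by (rule sum.cong) (auto split: split_indicator)
      then have "(\<Sum>j\<in>S. f j * unit_fun j i) = (if i \<in> S then f i else 0)"
        using assms by (simp add: sum.delta')
      then show "f i = (\<Sum>j\<in>S. (\<lambda>i. f j * unit_fun j i)) i"
        using f by (auto simp: sum_fun_apply coord_space_def)
    qed
    also have "\<dots> \<in> cfun.span (unit_fun ` S)"
      by (intro cfun.span_sum cfun.span_scale cfun.span_base) auto
    finally show "f \<in> cfun.span (unit_fun ` S)" .
  qed
qed (rule span_unit_funs_subset_coord_space)

lemma inj_unit_fun: "inj unit_fun"
proof (rule injI)
  fix j k assume "unit_fun j = unit_fun k"
  then have "unit_fun j j = unit_fun k j" by simp
  then show "j = k" by (simp add: indicator_eq_1_iff)
qed

lemma independent_unit_funs: "cfun.independent (unit_fun ` S)"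
proof
  assume "cfun.dependent (unit_fun ` S)"
  then obtain j where "j \<in> S" and "unit_fun j \<in> cfun.span (unit_fun ` S - {unit_fun j})"
    unfolding cfun.dependent_def by blast
  moreover have "unit_fun ` S - {unit_fun j} = unit_fun ` (S - {j})"
    by (metis image_set_diff[OF inj_unit_fun] image_empty image_insert)
  ultimately have "unit_fun j \<in> coord_space (S - {j})"
    using span_unit_funs_subset_coord_space by fastforce
  then have "j \<notin> S - {j} \<longrightarrow> unit_fun j j = 0"
    unfolding coord_space_def mem_Collect_eq by (rule spec)
  then show False by simp
qed

lemma dim_coord_space:
  assumes "finite S"
  shows "cfun.dim (coord_space S) = card S"
proof -
  have "cfun.dim (coord_space S) = card (unit_fun ` S)"
    using coord_space_eq_span[OF assms] cfun.span_superset
    by (intro cfun.dim_unique[OF _ _ independent_unit_funs refl]) auto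
  also have "\<dots> = card S"
    using inj_unit_fun by (simp add: card_image inj_on_def)
  finally show ?thesis .
qed

lemma dim_le_card_of_subset_coord_space:
  assumes "finite S" "A \<subseteq> coord_space S"
  shows "cfun.dim A \<le> card S"
proof -
  have "cfun.dim A \<le> card (unit_fun ` S)"
    using assms coord_space_eq_span[OF assms(1)] by (intro cfun.dim_le_card) auto
  also have "\<dots> \<le> card S" by (rule card_image_le[OF assms(1)])
  finally show ?thesis .
qed

definition cinner :: "nat \<Rightarrow> (nat \<Rightarrow> complex) \<Rightarrow> (nat \<Rightarrow> complex) \<Rightarrow> complex" where
  "cinner d f g = (\<Sum>i<d. f i * cnj (g i))"

definition orth :: "nat \<Rightarrow> (nat \<Rightarrow> complex) set \<Rightarrow> (nat \<Rightarrow> complex) set \<Rightarrow> bool" where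
  "orth d A B \<longleftrightarrow> (\<forall>x\<in>A. \<forall>y\<in>B. cinner d x y = 0)"

lemma cinner_commute: "cinner d g f = cnj (cinner d f g)"
  by (simp add: cinner_def mult.commute)

lemma cinner_eq_0_commute: "cinner d g f = 0 \<longleftrightarrow> cinner d f g = 0"
  by (subst cinner_commute) simp

lemma cinner_zero_left: "cinner d 0 h = 0"
  by (simp add: cinner_def)

lemma cinner_add_left: "cinner d (f + g) h = cinner d f h + cinner d g h"
  by (simp add: cinner_def distrib_right sum.distrib)

lemma cinner_scale_left: "cinner d (\<lambda>i. c * f i) h = c * cinner d f h"
  by (simp add: cinner_def sum_distrib_left mult.assoc)

lemma orth_sym: "orth d A B \<longleftrightarrow> orth d B A"
  unfolding orth_def using cinner_eq_0_commute by blast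

lemma orth_mono: "orth d A B \<Longrightarrow> A' \<subseteq> A \<Longrightarrow> B' \<subseteq> B \<Longrightarrow> orth d A' B'"
  unfolding orth_def by blast

lemma orth_span_left:
  assumes "orth d A B"
  shows "orth d (cfun.span A) B"
  unfolding orth_def
proof (intro ballI)
  fix x y assume x: "x \<in> cfun.span A" and y: "y \<in> B"
  have "cfun.subspace {x. cinner d x y = 0}"
    unfolding cfun.subspace_def by (simp add: cinner_zero_left cinner_add_left cinner_scale_left)
  then show "cinner d x y = 0"
    using cfun.span_minimal[of A "{x. cinner d x y = 0}"] assms x y unfolding orth_def by blast
qed

lemma orth_span: "orth d A B \<Longrightarrow> orth d (cfun.span A) (cfun.span B)"
  by (metis orth_span_left orth_sym)

lemma orth_self_subset_zero:
  assumes "A \<subseteq> coord_space {..<d}" "orth d A A"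
  shows "A \<subseteq> {0}"
proof
  fix x assume x: "x \<in> A"
  have "complex_of_real (\<Sum>i<d. (cmod (x i))\<^sup>2) = cinner d x x"
    by (simp add: cinner_def flip: complex_norm_square)
  also have "\<dots> = 0" using assms(2) x unfolding orth_def by blast
  finally have "\<forall>i<d. x i = 0"
    by (subst (asm) of_real_eq_0_iff, subst (asm) sum_nonneg_eq_0_iff) auto
  then show "x \<in> {0}" using assms(1) x by (auto simp: coord_space_def fun_eq_iff)
qed

lemma sum_dim_le_dim_Union_of_orth:
  assumes "finite I"
    and "\<And>i. i \<in> I \<Longrightarrow> cfun.subspace (F i) \<and> F i \<subseteq> coord_space {..<d}"
    and "\<And>i j. i \<in> I \<Longrightarrow> j \<in> I \<Longrightarrow> i \<noteq> j \<Longrightarrow> orth d (F i) (F j)"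
  shows "(\<Sum>i\<in>I. cfun.dim (F i)) \<le> cfun.dim (\<Union>i\<in>I. F i)"
  using assms
proof (induction I rule: finite_induct)
  case (insert i I)
  let ?R = "cfun.span (\<Union>j\<in>I. F j)"
  have Fi: "cfun.subspace (F i)" "F i \<subseteq> coord_space {..<d}"
    using insert.prems by auto
  have R: "?R \<subseteq> coord_space {..<d}"
    using insert.prems by (intro cfun.span_minimal subspace_coord_space) auto
  have "orth d (F i) (F j)" if "j \<in> I" for j
    using insert.prems(2)[of i j] insert.hyps(2) that by auto
  then have "orth d (F i) (\<Union>j\<in>I. F j)"
    unfolding orth_def by blast
  then have "orth d (cfun.span (F i)) ?R"
    by (rule orth_span)
  then have "orth d (F i) ?R"
    by (simp only: cfun.span_eq_iff[THEN iffD2, OF Fi(1)])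
  then have "orth d (F i \<inter> ?R) (F i \<inter> ?R)"
    by (rule orth_mono) auto
  moreover have "F i \<inter> ?R \<subseteq> coord_space {..<d}" using Fi(2) by blast
  ultimately have "F i \<inter> ?R \<subseteq> cfun.span {}"
    using orth_self_subset_zero by simp
  then have "cfun.dim (F i \<inter> ?R) = 0"
    using cfun.dim_le_card[of "F i \<inter> ?R" "{}"] by simp
  moreover have "cfun.dim (F i) + cfun.dim ?R \<le> cfun.dim (F i \<union> ?R) + cfun.dim (F i \<inter> ?R)"
    using Fi R coord_space_eq_span[of "{..<d}"]
    by (intro cfun.dim_add_dim_le_dim_Un_Int[of _ _ "unit_fun ` {..<d}"]) auto
  moreover have "cfun.dim (F i \<union> ?R) = cfun.dim (\<Union>j\<in>insert i I. F j)"
    using cfun.span_Un_span_left[of "\<Union>j\<in>I. F j" "F i"]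
    by (intro cfun.span_eq_dim) (simp add: Un_commute)
  moreover have "(\<Sum>j\<in>I. cfun.dim (F j)) \<le> cfun.dim ?R"
    using insert by simp
  ultimately show ?case using insert.hyps by simp
qed simp

lemma sum_dim_le_of_orth:
  assumes "finite I"
    and "\<And>i. i \<in> I \<Longrightarrow> cfun.subspace (F i) \<and> F i \<subseteq> coord_space {..<d}"
    and "\<And>i j. i \<in> I \<Longrightarrow> j \<in> I \<Longrightarrow> i \<noteq> j \<Longrightarrow> orth d (F i) (F j)"
  shows "(\<Sum>i\<in>I. cfun.dim (F i)) \<le> d"
proof -
  have "cfun.span (\<Union>i\<in>I. F i) \<subseteq> coord_space {..<d}"
    using assms(2) by (intro cfun.span_minimal subspace_coord_space) auto
  from dim_le_card_of_subset_coord_space[OF finite_lessThan this]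
  have "cfun.dim (\<Union>i\<in>I. F i) \<le> d" by simp
  moreover have "(\<Sum>i\<in>I. cfun.dim (F i)) \<le> cfun.dim (\<Union>i\<in>I. F i)"
    using assms by (rule sum_dim_le_dim_Union_of_orth)
  ultimately show ?thesis by linarith
qed

section \<open>Circular families of orthogonal subspaces\<close>

definition circ_orth_family ::
    "nat \<Rightarrow> nat \<Rightarrow> nat \<Rightarrow> (nat \<Rightarrow> (nat \<Rightarrow> complex) set) \<Rightarrow> bool" where
  "circ_orth_family d p q U \<longleftrightarrow>
     (\<forall>i<p. cfun.subspace (U i) \<and> U i \<subseteq> coord_space {..<d}) \<and>
     (\<forall>i j. i < j \<longrightarrow> j < p \<longrightarrow> q \<le> j - i \<longrightarrow> q \<le> p - (j - i) \<longrightarrow> orth d (U i) (U j))"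

definition partial_span :: "(nat \<Rightarrow> (nat \<Rightarrow> complex) set) \<Rightarrow> nat \<Rightarrow> (nat \<Rightarrow> complex) set" where
  "partial_span U j = cfun.span (\<Union>i\<le>j. U i)"

definition clique_family ::
    "nat \<Rightarrow> nat \<Rightarrow> (nat \<Rightarrow> (nat \<Rightarrow> complex) set) \<Rightarrow> nat \<Rightarrow> (nat \<Rightarrow> complex) set" where
  "clique_family q s U t = (if t = 0 then partial_span U s else U (s + t * Suc q))"

text \<open>For \<open>j \<ge> s\<close>, \<open>skip_index q s\<close> enumerates the positions above \<open>s\<close> that are not of
  the form \<open>s + t * Suc q\<close>; for \<open>j < s\<close> it is \<open>Suc j\<close>, by truncated subtraction.\<close>

definition skip_index :: "nat \<Rightarrow> nat \<Rightarrow> nat \<Rightarrow> nat" where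
  "skip_index q s j = j + 1 + (j - s) div q"

definition reduced_family ::
    "nat \<Rightarrow> nat \<Rightarrow> (nat \<Rightarrow> (nat \<Rightarrow> complex) set) \<Rightarrow> nat \<Rightarrow> (nat \<Rightarrow> complex) set" where
  "reduced_family q s U j =
     (if j < s then partial_span U j \<inter> U (Suc j) else U (skip_index q s j))"

lemma circ_orth_familyD:
  assumes "circ_orth_family d p q U"
  shows "i < p \<Longrightarrow> cfun.subspace (U i) \<and> U i \<subseteq> coord_space {..<d}"
    and "i < j \<Longrightarrow> j < p \<Longrightarrow> q \<le> j - i \<Longrightarrow> q \<le> p - (j - i) \<Longrightarrow> orth d (U i) (U j)"
  using assms unfolding circ_orth_family_def by blast+

lemma orth_partial_spanI:
  assumes "\<And>i. i \<le> j \<Longrightarrow> orth d (U i) B"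
  shows "orth d (partial_span U j) B"
  unfolding partial_span_def
  by (rule orth_span_left) (use assms in \<open>auto simp: orth_def\<close>)

lemma partial_span_subset_coord_space:
  assumes "\<And>i. i \<le> j \<Longrightarrow> U i \<subseteq> coord_space {..<d}"
  shows "partial_span U j \<subseteq> coord_space {..<d}"
  unfolding partial_span_def
  using assms by (intro cfun.span_minimal subspace_coord_space) auto

lemma orth_of_ordered:
  fixes i j n :: nat
  assumes "\<And>i j. i < j \<Longrightarrow> j < n \<Longrightarrow> orth d (F i) (F j)"
    and "i \<in> {..<n}" "j \<in> {..<n}" "i \<noteq> j"
  shows "orth d (F i) (F j)"
proof (cases "i < j")
  case True
  then show ?thesis using assms by simp
next
  case False
  then have "j < i" using assms(4) by linarith
  then have "orth d (F j) (F i)" using assms(1,2) by simp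
  then show ?thesis by (subst orth_sym)
qed

lemma circ_orth_family_one_sum_dim_le:
  assumes U: "circ_orth_family d p 1 U"
  shows "(\<Sum>i<p. cfun.dim (U i)) \<le> d"
proof (rule sum_dim_le_of_orth)
  show "orth d (U i) (U j)" if "i \<in> {..<p}" "j \<in> {..<p}" "i \<noteq> j" for i j
  proof (rule orth_of_ordered[OF _ that])
    show "orth d (U i) (U j)" if "i < j" "j < p" for i j
      using circ_orth_familyD(2)[OF U that] that by simp
  qed
qed (use circ_orth_familyD(1)[OF U] in auto)

lemma mult_add_le_mult_of_less: "i < j \<Longrightarrow> i * k + k \<le> j * (k::nat)"
  using mult_le_mono1[of "Suc i" j k] by simp

lemma clique_family_sum_dim_le:
  assumes U: "circ_orth_family d p (Suc q) U" and p: "p = m * Suc q + s" and s: "s \<le> q"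
  shows "(\<Sum>t<m. cfun.dim (clique_family q s U t)) \<le> d"
proof (rule sum_dim_le_of_orth)
  have pos_lt: "s + t * Suc q < p" if "t < m" for t
    using mult_add_le_mult_of_less[OF that, of "Suc q"] p by linarith
  have orth_pos: "orth d (clique_family q s U t) (U (s + t' * Suc q))" if "t < t'" "t' < m" for t t'
  proof -
    note facts = mult_add_le_mult_of_less[OF that(1), of "Suc q"]
      mult_add_le_mult_of_less[OF that(2), of "Suc q"] p s
    show ?thesis
    proof (cases "t = 0")
      case True
      have "orth d (U i) (U (s + t' * Suc q))" if "i \<le> s" for i
        by (rule circ_orth_familyD(2)[OF U]) (use facts that True in linarith)+
      then show ?thesis
        using True by (simp add: clique_family_def orth_partial_spanI)
    next
      case False
      then have "1 * Suc q \<le> t * Suc q" by (intro mult_le_mono1) simp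
      then have "Suc q \<le> t * Suc q" by (simp only: mult.left_neutral)
      then have "orth d (U (s + t * Suc q)) (U (s + t' * Suc q))"
        by (intro circ_orth_familyD(2)[OF U]) (use facts in linarith)+
      then show ?thesis
        using False by (simp add: clique_family_def)
    qed
  qed
  show "orth d (clique_family q s U t) (clique_family q s U t')"
    if "t \<in> {..<m}" "t' \<in> {..<m}" "t \<noteq> t'" for t t'
  proof (rule orth_of_ordered[OF _ that])
    show "orth d (clique_family q s U i) (clique_family q s U j)" if "i < j" "j < m" for i j
      using orth_pos[OF that] that by (simp add: clique_family_def)
  qed
  show "cfun.subspace (clique_family q s U t) \<and> clique_family q s U t \<subseteq> coord_space {..<d}"
    if "t \<in> {..<m}" for t
  proof (cases "t = 0")
    case True
    have "partial_span U s \<subseteq> coord_space {..<d}"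
      using pos_lt[of 0] that True circ_orth_familyD(1)[OF U]
      by (intro partial_span_subset_coord_space) simp
    then show ?thesis
      using True by (simp add: clique_family_def partial_span_def)
  next
    case False
    then show ?thesis
      using pos_lt[of t] that circ_orth_familyD(1)[OF U] by (simp add: clique_family_def)
  qed
qed simp

lemma skip_index_div_less:
  fixes j m q s :: nat
  assumes "j < m * q + s" "1 \<le> q" "1 \<le> m"
  shows "(j - s) div q < m"
proof (rule less_mult_imp_div_less)
  have "1 \<le> m * q" using assms(2,3) by simp
  then show "j - s < m * q" using assms(1) by linarith
qed

lemma skip_index_less:
  assumes "j < m * q + s" "1 \<le> q" "1 \<le> m"
  shows "skip_index q s j < m * Suc q + s"
  using skip_index_div_less[OF assms] assms(1) unfolding skip_index_def by simp

lemma reduced_family_orth: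
  assumes U: "circ_orth_family d p (Suc q) U"
    and p: "p = m * Suc q + s" and s: "s \<le> q" and m: "2 \<le> m" and q: "1 \<le> q"
    and jj: "j < j'" "j' < m * q + s" "q \<le> j' - j" "q \<le> m * q + s - (j' - j)"
  shows "orth d (reduced_family q s U j) (reduced_family q s U j')"
proof -
  define k' where "k' = (j' - s) div q"
  have p': "p = m * q + m + s" using p by simp
  have k': "k' < m" "skip_index q s j' = j' + 1 + k'"
    using skip_index_div_less[OF jj(2) q] m by (simp_all add: k'_def skip_index_def)
  have j': "skip_index q s j' < p" using skip_index_less[OF jj(2) q] m p by simp
  have "s \<le> j'" using jj s by linarith
  then have R': "reduced_family q s U j' = U (skip_index q s j')"
    by (simp add: reduced_family_def)
  show ?thesis
  proof (cases "s \<le> j")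
    case True
    define k where "k = (j - s) div q"
    have "(j - s) div q + 1 = (j - s + q) div q" using q by simp
    also have "\<dots> \<le> k'" unfolding k'_def using jj True by (intro div_le_mono) linarith
    finally have "k + 1 \<le> k'" unfolding k_def .
    then have "orth d (U (skip_index q s j)) (U (skip_index q s j'))"
      using k' j' jj p' by (intro circ_orth_familyD(2)[OF U]) (simp_all add: skip_index_def k_def)
    then show ?thesis using True R' by (simp add: reduced_family_def)
  next
    case False
    then have R: "reduced_family q s U j = partial_span U j \<inter> U (Suc j)"
      by (simp add: reduced_family_def)
    show ?thesis
    proof (cases "Suc q \<le> skip_index q s j' - Suc j")
      case True
      then have "orth d (U (Suc j)) (U (skip_index q s j'))"
        using k' j' jj p' by (intro circ_orth_familyD(2)[OF U]) linarith+
      then show ?thesis unfolding R R' by (rule orth_mono) auto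
    next
      case False
      have "2 * q \<le> m * q" using m by simp
      then have "orth d (U i) (U (skip_index q s j'))" if "i \<le> j" for i
        using k' j' jj p' that False \<open>\<not> s \<le> j\<close>
        by (intro circ_orth_familyD(2)[OF U]) linarith+
      then have "orth d (partial_span U j) (U (skip_index q s j'))" by (rule orth_partial_spanI)
      then show ?thesis unfolding R R' by (rule orth_mono) auto
    qed
  qed
qed

lemma reduced_family_circ_orth:
  assumes U: "circ_orth_family d p (Suc q) U"
    and p: "p = m * Suc q + s" and s: "s \<le> q" and m: "2 \<le> m" and q: "1 \<le> q"
  shows "circ_orth_family d (m * q + s) q (reduced_family q s U)"
proof -
  have "cfun.subspace (reduced_family q s U j) \<and> reduced_family q s U j \<subseteq> coord_space {..<d}"
    if j: "j < m * q + s" for j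
  proof (cases "j < s")
    case True
    have "Suc j < p" using True p m by (simp add: less_Suc_eq_le trans_le_add2)
    then show ?thesis
      using True circ_orth_familyD(1)[OF U]
      by (auto simp: reduced_family_def partial_span_def intro: cfun.subspace_inter)
  next
    case False
    have "skip_index q s j < p" using skip_index_less[OF j q] m p by simp
    then show ?thesis using False circ_orth_familyD(1)[OF U] by (simp add: reduced_family_def)
  qed
  then show ?thesis
    using reduced_family_orth[OF U p s m q] unfolding circ_orth_family_def by blast
qed

lemma sum_blocks:
  fixes g :: "nat \<Rightarrow> 'a::comm_monoid_add"
  shows "(\<Sum>i\<in>{s..<s + m * n}. g i) = (\<Sum>t<m. \<Sum>r<n. g (s + t * n + r))"
proof (induction m)
  case (Suc m)
  have Suc_mult_add_eq: "s + Suc m * n = s + m * n + n" by simp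
  have "(\<Sum>i\<in>{s..<s + Suc m * n}. g i)
      = (\<Sum>i\<in>{s..<s + m * n}. g i) + (\<Sum>i\<in>{s + m * n..<s + m * n + n}. g i)"
    unfolding Suc_mult_add_eq by (rule sum.atLeastLessThan_concat[symmetric]) auto
  also have "(\<Sum>i\<in>{s + m * n..<s + m * n + n}. g i) = (\<Sum>r<n. g (s + m * n + r))"
    by (simp add: sum.atLeastLessThan_shift_0 atLeast0LessThan comp_def)
  finally show ?case using Suc.IH by simp
qed simp

lemma sum_lessThan_add_split:
  fixes h :: "nat \<Rightarrow> 'a::comm_monoid_add"
  shows "(\<Sum>i<s + n. h i) = (\<Sum>i<s. h i) + (\<Sum>i\<in>{s..<s + n}. h i)"
  unfolding atLeast0LessThan[symmetric] by (rule sum.atLeastLessThan_concat[symmetric]) simp_all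

lemma sum_dim_reduced_family:
  assumes "1 \<le> q"
  shows "(\<Sum>j<m * q + s. cfun.dim (reduced_family q s U j))
    = (\<Sum>j<s. cfun.dim (partial_span U j \<inter> U (Suc j)))
      + (\<Sum>t<m. \<Sum>r<q. cfun.dim (U (s + t * Suc q + Suc r)))"
proof -
  have "(\<Sum>j\<in>{s..<s + m * q}. cfun.dim (reduced_family q s U j))
      = (\<Sum>t<m. \<Sum>r<q. cfun.dim (U (s + t * Suc q + Suc r)))"
    unfolding sum_blocks
  proof (intro sum.cong refl)
    fix t r assume "r \<in> {..<q}"
    then have "(t * q + r) div q = t" by simp
    then show "cfun.dim (reduced_family q s U (s + t * q + r)) = cfun.dim (U (s + t * Suc q + Suc r))"
      by (simp add: reduced_family_def skip_index_def algebra_simps)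
  qed
  then show ?thesis
    using sum_lessThan_add_split[where n = "m * q" and h = "\<lambda>j. cfun.dim (reduced_family q s U j)"]
    by (simp add: add.commute reduced_family_def)
qed

lemma sum_dim_le_clique_plus_reduced:
  assumes U: "circ_orth_family d p (Suc q) U"
    and p: "p = m * Suc q + s" and s: "s \<le> q" and m: "1 \<le> m" and q: "1 \<le> q"
  shows "(\<Sum>i<p. cfun.dim (U i))
    \<le> (\<Sum>t<m. cfun.dim (clique_family q s U t)) + (\<Sum>j<m * q + s. cfun.dim (reduced_family q s U j))"
proof -
  define g where "g i = cfun.dim (U i)" for i
  obtain m0 where m0: "m = Suc m0" using m by (cases m) auto
  have "(\<Sum>i\<in>{s..<s + m * Suc q}. g i)
      = (\<Sum>t<m. g (s + t * Suc q)) + (\<Sum>t<m. \<Sum>r<q. g (s + t * Suc q + Suc r))"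
    by (simp only: sum_blocks sum.lessThan_Suc_shift sum.distrib add_0_right)
  then have sum_U: "(\<Sum>i<p. g i)
      = (\<Sum>i<s. g i) + (\<Sum>t<m. g (s + t * Suc q)) + (\<Sum>t<m. \<Sum>r<q. g (s + t * Suc q + Suc r))"
    using sum_lessThan_add_split[where n = "m * Suc q" and h = g] p by (simp add: add.commute)
  have sum_R: "(\<Sum>j<m * q + s. cfun.dim (reduced_family q s U j))
      = (\<Sum>j<s. cfun.dim (partial_span U j \<inter> U (Suc j))) + (\<Sum>t<m. \<Sum>r<q. g (s + t * Suc q + Suc r))"
    unfolding g_def by (rule sum_dim_reduced_family[OF q])
  have sum_clique: "(\<Sum>t<m. cfun.dim (clique_family q s U t))
      = cfun.dim (partial_span U s) + (\<Sum>t<m0. g (s + Suc t * Suc q))"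
    unfolding m0 sum.lessThan_Suc_shift by (simp add: clique_family_def g_def)
  have "(\<Sum>t<m. g (s + t * Suc q)) = g s + (\<Sum>t<m0. g (s + Suc t * Suc q))"
    unfolding m0 sum.lessThan_Suc_shift by simp
  moreover have "(\<Sum>i\<le>s. g i) = (\<Sum>i<s. g i) + g s"
    by (simp flip: lessThan_Suc_atMost)
  moreover have "(\<Sum>i\<le>s. g i)
      \<le> cfun.dim (partial_span U s) + (\<Sum>j<s. cfun.dim (partial_span U j \<inter> U (Suc j)))"
    unfolding g_def partial_span_def cfun.dim_span
  proof (rule cfun.sum_dim_le_dim_Union_plus_overlaps[OF finite_imageI[OF finite_lessThan]])
    fix i assume "i \<le> s"
    then have "i < p" using p m by (simp add: less_le_trans[OF le_imp_less_Suc])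
    then show "cfun.subspace (U i) \<and> U i \<subseteq> cfun.span (unit_fun ` {..<d})"
      using circ_orth_familyD(1)[OF U] coord_space_eq_span[of "{..<d}"] by simp
  qed
  ultimately show ?thesis
    using sum_U sum_R sum_clique unfolding g_def by linarith
qed

lemma circ_orth_family_sum_dim_le:
  assumes "circ_orth_family d p q U" "1 \<le> q" "2 * q \<le> p"
  shows "(\<Sum>i<p. cfun.dim (U i)) \<le> q * d"
  using assms
proof (induction q arbitrary: p U)
  case 0
  then show ?case by simp
next
  case (Suc q)
  show ?case
  proof (cases "q = 0")
    case True
    then show ?thesis using circ_orth_family_one_sum_dim_le Suc.prems(1) by simp
  next
    case False
    define m where "m = p div Suc q"
    define s where "s = p mod Suc q"
    have p: "p = m * Suc q + s" unfolding m_def s_def by (rule div_mult_mod_eq[symmetric])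
    have s: "s \<le> q" using mod_less_divisor[of "Suc q" p] by (simp add: s_def)
    have "2 * Suc q div Suc q \<le> m" unfolding m_def using Suc.prems(3) by (rule div_le_mono)
    moreover have "2 * Suc q div Suc q = 2" by (rule nonzero_mult_div_cancel_right) simp
    ultimately have m: "2 \<le> m" by simp
    have q: "1 \<le> q" using False by simp
    have "2 * q \<le> m * q + s" using mult_le_mono1[OF m, of q] by linarith
    note reduced = Suc.IH[OF reduced_family_circ_orth[OF Suc.prems(1) p s m q] q this]
    have "(\<Sum>i<p. cfun.dim (U i))
        \<le> (\<Sum>t<m. cfun.dim (clique_family q s U t)) + (\<Sum>j<m * q + s. cfun.dim (reduced_family q s U j))"
      using m by (intro sum_dim_le_clique_plus_reduced[OF Suc.prems(1) p s _ q]) simp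
    also have "\<dots> \<le> d + q * d"
      using clique_family_sum_dim_le[OF Suc.prems(1) p s] reduced by (rule add_mono)
    finally show ?thesis by simp
  qed
qed

section \<open>Subspaces of \<open>complex vec\<close>\<close>

definition fun_of_vec :: "complex vec \<Rightarrow> nat \<Rightarrow> complex" where
  "fun_of_vec v i = (if i < dim_vec v then v $ i else 0)"

lemma fun_of_vec_in_coord_space: "v \<in> carrier_vec d \<Longrightarrow> fun_of_vec v \<in> coord_space {..<d}"
  by (simp add: fun_of_vec_def coord_space_def)

lemma inj_on_fun_of_vec: "inj_on fun_of_vec (carrier_vec d)"
proof (rule inj_onI)
  fix v w assume v: "v \<in> carrier_vec d" and w: "w \<in> carrier_vec d" and eq: "fun_of_vec v = fun_of_vec w"
  show "v = w"
  proof (rule eq_vecI)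
    show "dim_vec v = dim_vec w" using v w by simp
    show "v $ i = w $ i" if "i < dim_vec w" for i
      using fun_cong[OF eq, of i] v w that by (simp add: fun_of_vec_def)
  qed
qed

lemma fun_of_vec_add:
  "v \<in> carrier_vec d \<Longrightarrow> w \<in> carrier_vec d \<Longrightarrow> fun_of_vec (v + w) = fun_of_vec v + fun_of_vec w"
  by (auto simp: fun_of_vec_def)

lemma fun_of_vec_smult: "fun_of_vec (c \<cdot>\<^sub>v v) = (\<lambda>i. c * fun_of_vec v i)"
  by (auto simp: fun_of_vec_def)

lemma fun_of_vec_zero: "fun_of_vec (0\<^sub>v d) = 0"
  by (auto simp: fun_of_vec_def)

lemma herm_inner_eq_cinner:
  "v \<in> carrier_vec d \<Longrightarrow> w \<in> carrier_vec d \<Longrightarrow> herm_inner v w = cinner d (fun_of_vec v) (fun_of_vec w)"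
  by (simp add: herm_inner_def cinner_def fun_of_vec_def)

lemma orth_fun_of_vec_image:
  assumes "orth_sets A B" "A \<subseteq> carrier_vec d" "B \<subseteq> carrier_vec d"
  shows "orth d (fun_of_vec ` A) (fun_of_vec ` B)"
  unfolding orth_def
proof (intro ballI)
  fix x y assume "x \<in> fun_of_vec ` A" "y \<in> fun_of_vec ` B"
  then obtain v w where "v \<in> A" "w \<in> B" "x = fun_of_vec v" "y = fun_of_vec w" by blast
  then show "cinner d x y = 0"
    using assms herm_inner_eq_cinner[of v d w] unfolding orth_sets_def by auto
qed

context
  fixes d :: nat
begin

interpretation V: vec_space "TYPE(complex)" d .

lemma fun_of_vec_lincomb:
  assumes "finite A" "A \<subseteq> carrier_vec d"
  shows "fun_of_vec (V.lincomb a A) = (\<Sum>v\<in>A. (\<lambda>i. a v * fun_of_vec v i))"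
proof
  fix i
  have dim: "dim_vec (V.lincomb a A) = d" using V.lincomb_dim[OF assms] .
  show "fun_of_vec (V.lincomb a A) i = (\<Sum>v\<in>A. (\<lambda>i. a v * fun_of_vec v i)) i"
  proof (cases "i < d")
    case True
    then have "fun_of_vec (V.lincomb a A) i = (\<Sum>v\<in>A. a v * v $ i)"
      using V.lincomb_index[OF True assms(2)] dim by (simp add: fun_of_vec_def)
    also have "\<dots> = (\<Sum>v\<in>A. a v * fun_of_vec v i)"
      using assms(2) True by (intro sum.cong) (auto simp: fun_of_vec_def)
    finally show ?thesis by (simp add: sum_fun_apply)
  next
    case False
    then have "(\<Sum>v\<in>A. a v * fun_of_vec v i) = 0"
      using assms(2) by (intro sum.neutral) (auto simp: fun_of_vec_def)
    then show ?thesis using dim False by (simp add: fun_of_vec_def sum_fun_apply)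
  qed
qed

lemma subspace_imp_carrier:
  "VectorSpace.subspace class_ring W V.V \<Longrightarrow> W \<subseteq> carrier_vec d"
  using submodule.subset[OF subspace.submod] by (fastforce simp: module_vec_simps)

lemma subspace_fun_of_vec_image:
  assumes W: "VectorSpace.subspace class_ring W V.V"
  shows "cfun.subspace (fun_of_vec ` W)"
proof -
  have sm: "submodule class_ring W V.V" using subspace.submod[OF W] .
  have Wc: "W \<subseteq> carrier_vec d" using subspace_imp_carrier[OF W] .
  show ?thesis
    unfolding cfun.subspace_def
  proof (intro conjI ballI allI)
    show "0 \<in> fun_of_vec ` W"
      using fun_of_vec_zero[of d] submodule.zero_closed[OF sm] by (force simp: module_vec_simps)
    fix x y assume "x \<in> fun_of_vec ` W" "y \<in> fun_of_vec ` W"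
    then obtain v w where v: "v \<in> W" "x = fun_of_vec v" and w: "w \<in> W" "y = fun_of_vec w"
      by blast
    have "v + w \<in> W" using submodule.m_closed[OF sm v(1) w(1)] by (simp add: module_vec_simps)
    then show "x + y \<in> fun_of_vec ` W" using fun_of_vec_add[of v d w] v w Wc by force
  next
    fix c x assume "x \<in> fun_of_vec ` W"
    then obtain v where v: "v \<in> W" "x = fun_of_vec v" by blast
    have "c \<cdot>\<^sub>v v \<in> W" using submodule.smult_closed[OF sm _ v(1)] by (simp add: module_vec_simps)
    then show "(\<lambda>i. c * x i) \<in> fun_of_vec ` W" using fun_of_vec_smult[of c v] v(2) by force
  qed
qed

lemma subspace_has_finite_basis:
  assumes W: "VectorSpace.subspace class_ring W V.V"
  obtains B where "finite B" "B \<subseteq> W" "V.lin_indpt B" "V.span B = W"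
proof -
  have sm: "submodule class_ring W V.V" using subspace.submod[OF W] .
  have Wc: "W \<subseteq> carrier_vec d" using subspace_imp_carrier[OF W] .
  let ?P = "\<lambda>S. S \<subseteq> W \<and> V.lin_indpt S"
  have "finite S \<and> card S \<le> d" if "?P S" for S
    using that V.li_le_dim V.dim_is_n Wc by (metis V.fin_dim subset_trans)
  moreover have "?P {}" by (simp add: V.lin_dep_def)
  ultimately obtain B where B: "finite B" "maximal B ?P"
    using maximal_exists[of ?P d "{}"] by blast
  then have BW: "B \<subseteq> W" and li: "V.lin_indpt B" unfolding maximal_def by auto
  have "W \<subseteq> V.span B"
  proof
    fix w assume w: "w \<in> W"
    show "w \<in> V.span B"
    proof (rule ccontr)
      assume nw: "w \<notin> V.span B"
      then have "w \<notin> B" using V.in_own_span[of B] BW Wc by blast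
      moreover have "V.lin_indpt (B \<union> {w})"
        using V.lin_dep_iff_in_span[of B w] BW Wc li w nw \<open>w \<notin> B\<close> by blast
      then have "B \<union> {w} = B" using B(2) BW w unfolding maximal_def by blast
      ultimately show False by blast
    qed
  qed
  then have "V.span B = W" using V.span_is_subset[OF BW sm] by blast
  then show ?thesis using that B(1) BW li by blast
qed

lemma fun_of_vec_span_subset:
  assumes "B \<subseteq> carrier_vec d"
  shows "fun_of_vec ` V.span B \<subseteq> cfun.span (fun_of_vec ` B)"
proof
  fix x assume "x \<in> fun_of_vec ` V.span B"
  then obtain a A where x: "x = fun_of_vec (V.lincomb a A)" "finite A" "A \<subseteq> B"
    unfolding V.span_def by blast
  then have "x = (\<Sum>v\<in>A. (\<lambda>i. a v * fun_of_vec v i))"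
    using fun_of_vec_lincomb assms by blast
  also have "\<dots> \<in> cfun.span (fun_of_vec ` B)"
    using x(3) by (intro cfun.span_sum cfun.span_scale cfun.span_base) auto
  finally show "x \<in> cfun.span (fun_of_vec ` B)" .
qed

lemma independent_fun_of_vec_image:
  assumes B: "finite B" "B \<subseteq> carrier_vec d" "V.lin_indpt B"
  shows "cfun.independent (fun_of_vec ` B)"
proof
  assume "cfun.dependent (fun_of_vec ` B)"
  then obtain u where u: "\<exists>x\<in>fun_of_vec ` B. u x \<noteq> 0"
    "(\<Sum>x\<in>fun_of_vec ` B. (\<lambda>i. u x * x i)) = 0"
    using cfun.dependent_finite[OF finite_imageI[OF B(1)]] by blast
  have inj: "inj_on fun_of_vec B" using inj_on_subset[OF inj_on_fun_of_vec B(2)] .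
  have "fun_of_vec (V.lincomb (u \<circ> fun_of_vec) B)
      = (\<Sum>v\<in>B. (\<lambda>i. u (fun_of_vec v) * fun_of_vec v i))"
    using fun_of_vec_lincomb[OF B(1,2)] by simp
  also have "\<dots> = fun_of_vec (0\<^sub>v d)"
    using u(2) sum.reindex[OF inj, of "\<lambda>x. (\<lambda>i. u x * x i)"] fun_of_vec_zero by simp
  finally have "V.lincomb (u \<circ> fun_of_vec) B = 0\<^sub>v d"
    using inj_on_fun_of_vec[of d] V.lincomb_closed[OF B(2)] by (auto simp: inj_on_def)
  moreover obtain v where "v \<in> B" "(u \<circ> fun_of_vec) v \<noteq> 0" using u(1) by auto
  ultimately have "V.lin_dep B" unfolding V.lin_dep_def using B(1) by blast
  then show False using B(3) by simp
qed

lemma dim_fun_of_vec_image: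
  assumes W: "VectorSpace.subspace class_ring W V.V"
  shows "vectorspace.dim class_ring (V.V\<lparr>carrier := W\<rparr>) = cfun.dim (fun_of_vec ` W)"
proof -
  obtain B where B: "finite B" "B \<subseteq> W" "V.lin_indpt B" "V.span B = W"
    using subspace_has_finite_basis[OF W] .
  have BC: "B \<subseteq> carrier_vec d" using B(2) subspace_imp_carrier[OF W] by blast
  interpret VW: vectorspace class_ring "V.vs W" using V.subspace_is_vs[OF W] .
  have "VW.basis B"
    unfolding VW.basis_def using V.span_li_not_depend[OF B(2) subspace.submod[OF W]] B by simp
  then have "vectorspace.dim class_ring (V.V\<lparr>carrier := W\<rparr>) = card B"
    using VW.dim_basis[OF B(1)] by simp
  also have "\<dots> = card (fun_of_vec ` B)"
    using card_image inj_on_subset[OF inj_on_fun_of_vec BC] by metis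
  also have "\<dots> = cfun.dim (fun_of_vec ` W)"
    using B(2) fun_of_vec_span_subset[OF BC] B(4)
    by (intro cfun.basis_card_eq_dim independent_fun_of_vec_image[OF B(1) BC B(3)]) auto
  finally show ?thesis .
qed

end

section \<open>Fraction graphs\<close>

lemma cyc_dist_less: "i < j \<Longrightarrow> cyc_dist p i j = min (j - i) (p - (j - i))"
  by (simp add: cyc_dist_def Let_def)

lemma not_frac_adj_iff:
  "i < j \<Longrightarrow> \<not> frac_adj p q i j \<longleftrightarrow> q \<le> j - i \<and> q \<le> p - (j - i)"
  by (simp add: frac_adj_def cyc_dist_less min_less_iff_disj not_less)

lemma compl_proj_rep_imp_circ_orth_family:
  assumes "compl_proj_rep {0..<p} (frac_adj p q) d r"
  obtains W where "circ_orth_family d p q (\<lambda>i. fun_of_vec ` W i)"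
    and "\<And>i. i < p \<Longrightarrow> cfun.dim (fun_of_vec ` W i) = r"
proof -
  obtain W where dimW: "\<forall>i\<in>{0..<p}. is_subspace_of_dim d r (W i)"
    and orthW: "\<forall>i\<in>{0..<p}. \<forall>j\<in>{0..<p}. i \<noteq> j \<and> \<not> frac_adj p q i j \<longrightarrow> orth_sets (W i) (W j)"
    using assms unfolding compl_proj_rep_def by blast
  have sub: "VectorSpace.subspace class_ring (W i) (module_vec TYPE(complex) d)" if "i < p" for i
    using dimW that unfolding is_subspace_of_dim_def by simp
  have "orth d (fun_of_vec ` W i) (fun_of_vec ` W j)"
    if "i < j" "j < p" "q \<le> j - i" "q \<le> p - (j - i)" for i j
  proof -
    have "orth_sets (W i) (W j)" using orthW that not_frac_adj_iff[of i j p q] by auto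
    moreover have "W i \<subseteq> carrier_vec d" "W j \<subseteq> carrier_vec d"
      using subspace_imp_carrier sub that by auto
    ultimately show ?thesis by (rule orth_fun_of_vec_image)
  qed
  moreover have "cfun.subspace (fun_of_vec ` W i) \<and> fun_of_vec ` W i \<subseteq> coord_space {..<d}"
    if "i < p" for i
    using subspace_fun_of_vec_image[OF sub[OF that]] subspace_imp_carrier[OF sub[OF that]]
      fun_of_vec_in_coord_space by blast
  ultimately have "circ_orth_family d p q (\<lambda>i. fun_of_vec ` W i)"
    unfolding circ_orth_family_def by blast
  moreover have "cfun.dim (fun_of_vec ` W i) = r" if "i < p" for i
    using dimW that dim_fun_of_vec_image[OF sub[OF that]] unfolding is_subspace_of_dim_def by simp
  ultimately show ?thesis by (rule that)
qed

lemma compl_proj_rep_bound: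
  assumes "compl_proj_rep {0..<p} (frac_adj p q) d r" "1 \<le> q" "2 * q \<le> p"
  shows "p * r \<le> q * d"
proof -
  obtain W where U: "circ_orth_family d p q (\<lambda>i. fun_of_vec ` W i)"
    and dim: "\<And>i. i < p \<Longrightarrow> cfun.dim (fun_of_vec ` W i) = r"
    using compl_proj_rep_imp_circ_orth_family[OF assms(1)] by blast
  have "p * r = (\<Sum>i<p. cfun.dim (fun_of_vec ` W i))" using dim by simp
  also have "\<dots> \<le> q * d" using circ_orth_family_sum_dim_le[OF U assms(2,3)] .
  finally show ?thesis .
qed

definition window :: "nat \<Rightarrow> nat \<Rightarrow> nat \<Rightarrow> nat set" where
  "window p q i = (\<lambda>t. (i + t) mod p) ` {..<q}"

definition window_space :: "nat \<Rightarrow> nat \<Rightarrow> nat \<Rightarrow> complex vec set" where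
  "window_space p q i = {v \<in> carrier_vec p. \<forall>k<p. k \<notin> window p q i \<longrightarrow> v $ k = 0}"

lemma mod_eq_if_less_double: "x < 2 * p \<Longrightarrow> x mod p = (if x < p then x else x - p)"
  for x p :: nat
  by (simp add: le_mod_geq)

lemma card_window:
  assumes "i < p" "q \<le> p"
  shows "card (window p q i) = q"
proof -
  have "inj_on (\<lambda>t. (i + t) mod p) {..<q}"
  proof (rule inj_onI)
    fix t t' assume "t \<in> {..<q}" "t' \<in> {..<q}" "(i + t) mod p = (i + t') mod p"
    then show "t = t'"
      using assms mod_eq_if_less_double[of "i + t" p] mod_eq_if_less_double[of "i + t'" p]
      by (auto split: if_splits)
  qed
  then show ?thesis unfolding window_def by (simp add: card_image)
qed

lemma window_subset: "0 < p \<Longrightarrow> window p q i \<subseteq> {..<p}"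
  by (auto simp: window_def)

lemma cyc_dist_less_of_window:
  assumes "i < p" "j < p" "q \<le> p" "k \<in> window p q i" "k \<in> window p q j"
  shows "cyc_dist p i j < q"
proof -
  obtain t t' where "t < q" "t' < q" "(i + t) mod p = (j + t') mod p"
    using assms(4,5) unfolding window_def by auto
  then show ?thesis
    using assms(1-3) mod_eq_if_less_double[of "i + t" p] mod_eq_if_less_double[of "j + t'" p]
    by (auto simp: cyc_dist_def Let_def split: if_splits)
qed

lemma subspace_window_space:
  "VectorSpace.subspace class_ring (window_space p q i) (module_vec TYPE(complex) p)"
  unfolding VectorSpace.subspace_def LinearCombinations.submodule_def window_space_def
  using vec_vs vec_module by (auto simp: module_vec_simps)

lemma fun_of_vec_window_space:
  assumes "0 < p"
  shows "fun_of_vec ` window_space p q i = coord_space (window p q i)"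
proof
  show "fun_of_vec ` window_space p q i \<subseteq> coord_space (window p q i)"
    by (auto simp: window_space_def coord_space_def fun_of_vec_def)
  show "coord_space (window p q i) \<subseteq> fun_of_vec ` window_space p q i"
  proof
    fix f assume f: "f \<in> coord_space (window p q i)"
    then have "f k = 0" if "p \<le> k" for k
      using window_subset[OF assms] that unfolding coord_space_def by force
    then have "fun_of_vec (vec p f) = f" by (auto simp: fun_of_vec_def)
    moreover have "vec p f \<in> window_space p q i"
      using f by (auto simp: window_space_def coord_space_def)
    ultimately show "f \<in> fun_of_vec ` window_space p q i" by force
  qed
qed

lemma compl_proj_rep_windows:
  assumes "1 \<le> q" "q \<le> p"
  shows "compl_proj_rep {0..<p} (frac_adj p q) p q"
  unfolding compl_proj_rep_def
proof (intro exI[of _ "window_space p q"] conjI ballI impI)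
  fix i assume "i \<in> {0..<p}"
  then have "i < p" by simp
  then have "cfun.dim (fun_of_vec ` window_space p q i) = q"
    using fun_of_vec_window_space dim_coord_space card_window assms(2) window_def by simp
  then show "is_subspace_of_dim p q (window_space p q i)"
    unfolding is_subspace_of_dim_def
    using subspace_window_space dim_fun_of_vec_image[OF subspace_window_space] by simp
next
  fix u v assume uv: "u \<in> {0..<p}" "v \<in> {0..<p}" "u \<noteq> v \<and> \<not> frac_adj p q u v"
  show "orth_sets (window_space p q u) (window_space p q v)"
    unfolding orth_sets_def
  proof (intro ballI)
    fix x y assume x: "x \<in> window_space p q u" and y: "y \<in> window_space p q v"
    have terms_zero: "x $ k * cnj (y $ k) = 0" if "k < p" for k
    proof (cases "k \<in> window p q u \<and> k \<in> window p q v")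
      case True
      then have "frac_adj p q u v"
        using cyc_dist_less_of_window[of u p v q k] uv assms by (simp add: frac_adj_def)
      then show ?thesis using uv by simp
    next
      case False
      then show ?thesis using x y that unfolding window_space_def by auto
    qed
    moreover have "dim_vec x = p" using x by (simp add: window_space_def)
    ultimately show "herm_inner x y = 0"
      unfolding herm_inner_def by (intro sum.neutral) simp
  qed
qed

theorem lemma13:
  fixes p q :: nat
  assumes "q \<ge> 1" and "real p / real q \<ge> 2"
  shows "compl_proj_rank {0..<p} (frac_adj p q) = real p / real q"
proof -
  have "2 * q \<le> p" using assms by (simp add: le_divide_eq)
  let ?ratios = "{real d / real r | d r. d \<ge> 1 \<and> r \<ge> 1 \<and> compl_proj_rep {0..<p} (frac_adj p q) d r}"
  have "real p / real q \<in> ?ratios"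
    using compl_proj_rep_windows[of q p] \<open>2 * q \<le> p\<close> assms(1) by fastforce
  moreover have "real p / real q \<le> x" if ratio: "x \<in> ?ratios" for x
  proof -
    obtain d r where x: "x = real d / real r" "r \<ge> 1" "compl_proj_rep {0..<p} (frac_adj p q) d r"
      using ratio by blast
    have "p * r \<le> q * d" using compl_proj_rep_bound[OF x(3) assms(1) \<open>2 * q \<le> p\<close>] .
    then have "real p * real r \<le> real d * real q"
      by (metis mult.commute of_nat_le_iff of_nat_mult)
    moreover have "0 < real r" "0 < real q" using x(2) assms(1) by simp_all
    ultimately show ?thesis unfolding x(1) by (simp add: field_simps)
  qed
  ultimately show ?thesis unfolding compl_proj_rank_def by (rule cInf_eq_minimum)
qed

end
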